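(* Let $n\ge4$ and let $A$ be an $n\times n$ completely positive matrix whose graph is the $n$-cycle $1-2-\cdots-n-1$, and suppose $A=BB^T$ where $B$ is the $n\times n$ matrix whose $i$-th column, for $1\le i\le n-1$, has entry $s_i$ in row $i$, entry $t_i$ in row $i+1$ and zeros elsewhere, and whose $n$-th column has entry $t_n$ in row $1$, entry $s_n$ in row $n$ and zeros elsewhere, with all $s_i,t_i>0$. Then $A=BB^T$ is the unique CP factorization of $A$ if and only if $\prod_{i=1}^n s_i=\prod_{i=1}^n t_i$.
   Context: A symmetric $n\times n$ matrix $A$ is completely positive if $A=BB^T$ for some entrywise nonnegative $n\times k$ matrix $B$; such an equality is a CP factorization of $A$. Only CP factorizations in which the columns of $B$ are pairwise linearly independent are considered, and two CP factorizations $A=BB^T=CC^T$ are considered equal if $C=BP$ for a permutation matrix $P$. The graph of a symmetric $n\times n$ matrix $A$ has vertex set $\{1,\dots,n\}$, with $\{i,j\}$ ($i\ne j$) an edge iff $a_{ij}\ne 0$. *)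

theory Defs
  imports Complex_Main
begin

text \<open>Matrices are represented as functions nat \<Rightarrow> nat \<Rightarrow> real, with rows/columns
  indexed from 0; an n x k matrix uses the entries with row < n and column < k.
  Vertex i of the paper corresponds to index i-1 here.\<close>

definition nonneg_mat :: "nat \<Rightarrow> nat \<Rightarrow> (nat \<Rightarrow> nat \<Rightarrow> real) \<Rightarrow> bool" where
  "nonneg_mat n k C \<longleftrightarrow> (\<forall>i<n. \<forall>j<k. C i j \<ge> 0)"

definition is_gram :: "nat \<Rightarrow> nat \<Rightarrow> (nat \<Rightarrow> nat \<Rightarrow> real) \<Rightarrow> (nat \<Rightarrow> nat \<Rightarrow> real) \<Rightarrow> bool" where
  "is_gram n k A C \<longleftrightarrow> (\<forall>i<n. \<forall>j<n. A i j = (\<Sum>l<k. C i l * C j l))"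

definition completely_positive :: "nat \<Rightarrow> (nat \<Rightarrow> nat \<Rightarrow> real) \<Rightarrow> bool" where
  "completely_positive n A \<longleftrightarrow> (\<exists>k C. nonneg_mat n k C \<and> is_gram n k A C)"

definition cols_lin_indep :: "nat \<Rightarrow> (nat \<Rightarrow> nat \<Rightarrow> real) \<Rightarrow> nat \<Rightarrow> nat \<Rightarrow> bool" where
  "cols_lin_indep n C l l' \<longleftrightarrow>
     (\<forall>a b. (\<forall>i<n. a * C i l + b * C i l' = 0) \<longrightarrow> a = 0 \<and> b = 0)"

definition cp_factorization :: "nat \<Rightarrow> nat \<Rightarrow> (nat \<Rightarrow> nat \<Rightarrow> real) \<Rightarrow> (nat \<Rightarrow> nat \<Rightarrow> real) \<Rightarrow> bool" where
  "cp_factorization n k A C \<longleftrightarrow> nonneg_mat n k C \<and> is_gram n k A C \<and>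
     (\<forall>l<k. \<forall>l'<k. l \<noteq> l' \<longrightarrow> cols_lin_indep n C l l')"

definition unique_cp_factorization :: "nat \<Rightarrow> nat \<Rightarrow> (nat \<Rightarrow> nat \<Rightarrow> real) \<Rightarrow> (nat \<Rightarrow> nat \<Rightarrow> real) \<Rightarrow> bool" where
  "unique_cp_factorization n m A B \<longleftrightarrow> cp_factorization n m A B \<and>
     (\<forall>k C. cp_factorization n k A C \<longrightarrow>
        k = m \<and> (\<exists>\<sigma>. bij_betw \<sigma> {..<m} {..<m} \<and> (\<forall>i<n. \<forall>j<m. C i j = B i (\<sigma> j))))"

definition graph_edges :: "nat \<Rightarrow> (nat \<Rightarrow> nat \<Rightarrow> real) \<Rightarrow> nat set set" where
  "graph_edges n A = {{i, j} | i j. i < n \<and> j < n \<and> i \<noteq> j \<and> A i j \<noteq> 0}"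

definition cycle_edges :: "nat \<Rightarrow> nat set set" where
  "cycle_edges n = {{i, (i + 1) mod n} | i. i < n}"

definition cycB :: "nat \<Rightarrow> (nat \<Rightarrow> real) \<Rightarrow> (nat \<Rightarrow> real) \<Rightarrow> nat \<Rightarrow> nat \<Rightarrow> real" where
  "cycB n s t i j = (if i = j then s j else if i = (j + 1) mod n then t j else 0)"

end

theory Submission
  imports Defs "HOL-Analysis.Convex"
begin

text \<open>Let \<open>A = B B\<^sup>T\<close> with \<open>B = cycB n s t\<close>, and let \<open>A = C C\<^sup>T\<close> be any CP factorization.
  For \<open>n \<ge> 4\<close> the \<open>n\<close>-cycle has no triangles, so a column of \<open>C\<close> that is positive at both ends
  of the edge \<open>{i, i+1}\<close> vanishes elsewhere. Summing squares over these columns gives \<open>a i\<close>,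
  \<open>b i\<close> with \<open>(s i * t i)\<^sup>2 \<le> a i * b i\<close> (Cauchy-Schwarz, as \<open>A i (i+1) = s i * t i\<close>) and
  \<open>a (i+1) + b i \<le> s (i+1)\<^sup>2 + t i\<^sup>2\<close> (the diagonal of \<open>A\<close>). Then \<open>w i = a i - s i\<^sup>2\<close> satisfies
  \<open>w (i+1) * a i \<le> t i\<^sup>2 * w i\<close>, so its sign propagates around the cycle, and a constant strict
  sign contradicts \<open>\<Prod>s = \<Prod>t\<close>. Hence all these inequalities are tight; equality in
  Cauchy-Schwarz and pairwise independence leave exactly one column per edge, so \<open>C\<close> is \<open>B\<close> up
  to a permutation of columns.

  If \<open>\<Prod>s \<noteq> \<Prod>t\<close>, replace column \<open>i\<close> of \<open>B\<close> by \<open>(s i * sqrt (X i), t i / sqrt (X i))\<close>. The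
  off-diagonal entries of the Gram matrix do not change, and choosing \<open>X\<close> along an orbit of an
  affine map of slope \<open>(\<Prod>s)\<^sup>2 / (\<Prod>t)\<^sup>2 \<noteq> 1\<close> keeps all diagonal entries but one, which
  decreases. An extra column supported at that vertex restores \<open>A\<close>, giving a CP factorization
  with \<open>n + 1\<close> columns.\<close>

lemma Suc_mod_eq_if: "i < n \<Longrightarrow> Suc i mod n = (if Suc i = n then 0 else Suc i)"
  by (simp add: mod_Suc)

lemma ex_Suc_mod_eq:
  assumes "m < n"
  shows "\<exists>i<n. m = Suc i mod n"
proof (cases m)
  case 0
  then show ?thesis
    using assms by (intro exI[of _ "n - 1"]) simp
next
  case (Suc i)
  then show ?thesis
    using assms by (intro exI[of _ i]) simp
qed

lemma bij_betw_Suc_mod: "bij_betw (\<lambda>i. Suc i mod n) {..<n} {..<n}"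
proof (rule bij_betw_imageI)
  show "inj_on (\<lambda>i. Suc i mod n) {..<n}"
    by (auto simp: inj_on_def Suc_mod_eq_if split: if_splits)
  show "(\<lambda>i. Suc i mod n) ` {..<n} = {..<n}"
    by (auto dest: ex_Suc_mod_eq)
qed

lemma prod_Suc_mod: "(\<Prod>i<n. f (Suc i mod n)) = (\<Prod>i<n. f i)"
  by (rule prod.reindex_bij_betw[OF bij_betw_Suc_mod])

lemma cyclic_induct:
  assumes "j < n" "P j" "\<And>i. i < n \<Longrightarrow> P i \<Longrightarrow> P (Suc i mod n)" "i < n"
  shows "P i"
proof -
  have "P ((j + m) mod n)" for m
  proof (induction m)
    case (Suc m)
    then show ?case
      using assms(1) assms(3)[of "(j + m) mod n"] by (simp add: mod_Suc_eq)
  qed (use assms in simp)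
  from this[of "n + i - j"] show ?thesis
    using assms(1,4) by simp
qed

section \<open>The Gram matrix of a cycle factor\<close>

lemma cycB_gram_diag:
  assumes "2 \<le> n" "i < n"
  shows "(\<Sum>l<n. cycB n \<sigma> \<tau> (Suc i mod n) l * cycB n \<sigma> \<tau> (Suc i mod n) l)
    = \<sigma> (Suc i mod n) ^ 2 + \<tau> i ^ 2"
proof -
  have "cycB n \<sigma> \<tau> (Suc i mod n) l * cycB n \<sigma> \<tau> (Suc i mod n) l
      = (if l = Suc i mod n then \<sigma> l ^ 2 else 0) + (if l = i then \<tau> l ^ 2 else 0)" if "l < n" for l
    using assms that by (auto simp: cycB_def power2_eq_square Suc_mod_eq_if)
  then show ?thesis
    using assms by (simp add: sum.distrib)
qed

lemma cycB_gram_off_diag: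
  assumes "3 \<le> n" "i < n" "j < n" "i \<noteq> j"
  shows "(\<Sum>l<n. cycB n \<sigma> \<tau> i l * cycB n \<sigma> \<tau> j l)
    = (if j = Suc i mod n then \<sigma> i * \<tau> i else if i = Suc j mod n then \<sigma> j * \<tau> j else 0)"
proof -
  have "cycB n \<sigma> \<tau> i l * cycB n \<sigma> \<tau> j l
      = (if l = i then (if j = Suc i mod n then \<sigma> i * \<tau> i else 0) else 0)
      + (if l = j then (if i = Suc j mod n then \<sigma> j * \<tau> j else 0) else 0)" if "l < n" for l
    using assms that by (auto simp: cycB_def Suc_mod_eq_if)
  moreover have "\<not> (j = Suc i mod n \<and> i = Suc j mod n)"
    using assms by (auto simp: Suc_mod_eq_if)
  ultimately show ?thesis
    using assms by (auto simp: sum.distrib)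
qed

lemma cols_lin_indepI:
  assumes "m < n" "C m l \<noteq> 0" "C m l' = 0" "m' < n" "C m' l' \<noteq> 0"
  shows "cols_lin_indep n C l l'"
  unfolding cols_lin_indep_def
proof (intro allI impI)
  fix a b
  assume combination: "\<forall>i<n. a * C i l + b * C i l' = 0"
  then have "a = 0"
    using assms(1-3) by auto
  moreover from this have "b = 0"
    using combination assms(4,5) by auto
  ultimately show "a = 0 \<and> b = 0" ..
qed

lemma cols_lin_indep_cong:
  assumes "\<And>i. i < n \<Longrightarrow> C i l = D i l" "\<And>i. i < n \<Longrightarrow> C i l' = D i l'"
  shows "cols_lin_indep n C l l' \<longleftrightarrow> cols_lin_indep n D l l'"
  using assms by (simp add: cols_lin_indep_def)

lemma cols_lin_indep_commute: "cols_lin_indep n C l l' \<longleftrightarrow> cols_lin_indep n C l' l"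
  unfolding cols_lin_indep_def by (metis add.commute)

lemma cols_lin_indep_nonzero_col:
  assumes "cols_lin_indep n C l l'"
  shows "\<exists>m<n. C m l \<noteq> 0"
  using assms unfolding cols_lin_indep_def by (metis add_0 mult_zero_left mult_zero_right zero_neq_one)

lemma cycB_cols_lin_indep:
  assumes "3 \<le> n" "\<forall>i<n. \<sigma> i \<noteq> 0 \<and> \<tau> i \<noteq> 0" "l < n" "l' < n" "l \<noteq> l'"
  shows "cols_lin_indep n (cycB n \<sigma> \<tau>) l l'"
proof -
  define m where "m = (if l = Suc l' mod n then Suc l mod n else l)"
  have "m < n" "cycB n \<sigma> \<tau> m l \<noteq> 0" "cycB n \<sigma> \<tau> m l' = 0"
    using assms by (auto simp: m_def cycB_def Suc_mod_eq_if)
  moreover have "cycB n \<sigma> \<tau> l' l' \<noteq> 0"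
    using assms by (simp add: cycB_def)
  ultimately show ?thesis
    using cols_lin_indepI assms(4) by blast
qed

lemma cycB_cp_factorization:
  assumes "3 \<le> n" "\<forall>i<n. 0 < \<sigma> i \<and> 0 < \<tau> i" "is_gram n n A (cycB n \<sigma> \<tau>)"
  shows "cp_factorization n n A (cycB n \<sigma> \<tau>)"
proof -
  have "\<forall>i<n. \<sigma> i \<noteq> 0 \<and> \<tau> i \<noteq> 0"
    using assms(2) by auto
  with assms show ?thesis
    using cycB_cols_lin_indep[of n \<sigma> \<tau>]
    by (auto simp: cp_factorization_def nonneg_mat_def cycB_def less_imp_le)
qed

section \<open>Non-uniqueness for unequal products\<close>

lemma cycB_extended_cp_factorization:
  fixes s t \<sigma> \<tau> :: "nat \<Rightarrow> real"
  assumes n: "3 \<le> n" and pos: "\<forall>i<n. 0 < \<sigma> i \<and> 0 < \<tau> i" and "0 < d"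
    and edge: "\<forall>i<n. \<sigma> i * \<tau> i = s i * t i"
    and vertex: "\<forall>i<n. \<sigma> (Suc i mod n) ^ 2 + \<tau> i ^ 2 + (if Suc i mod n = 0 then d else 0)
                       = s (Suc i mod n) ^ 2 + t i ^ 2"
    and A: "is_gram n n A (cycB n s t)"
  shows "cp_factorization n (Suc n) A
           (\<lambda>i l. if l < n then cycB n \<sigma> \<tau> i l else if i = 0 then sqrt d else 0)"
    (is "cp_factorization n (Suc n) A ?C")
proof -
  have "0 \<le> ?C i l" if "i < n" for i l
    using pos that \<open>0 < d\<close> by (auto simp: cycB_def intro: less_imp_le)
  then have nonneg: "nonneg_mat n (Suc n) ?C"
    by (simp add: nonneg_mat_def)
  have "A i j = (\<Sum>l<Suc n. ?C i l * ?C j l)" if i: "i < n" and j: "j < n" for i j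
  proof -
    have A_ij: "A i j = (\<Sum>l<n. cycB n s t i l * cycB n s t j l)"
      using A i j by (simp add: is_gram_def)
    have sum_C: "(\<Sum>l<Suc n. ?C i l * ?C j l)
        = (\<Sum>l<n. cycB n \<sigma> \<tau> i l * cycB n \<sigma> \<tau> j l) + (if i = 0 \<and> j = 0 then d else 0)"
      using \<open>0 < d\<close> by simp
    show ?thesis
    proof (cases "i = j")
      case True
      obtain p where p: "p < n" "i = Suc p mod n"
        using ex_Suc_mod_eq[OF i] by blast
      have "(\<Sum>l<Suc n. ?C i l * ?C j l)
          = \<sigma> (Suc p mod n) ^ 2 + \<tau> p ^ 2 + (if Suc p mod n = 0 then d else 0)"
        using sum_C cycB_gram_diag[of n p \<sigma> \<tau>] n p True by simp
      also have "\<dots> = A i j"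
        using A_ij cycB_gram_diag[of n p s t] vertex n p True by simp
      finally show ?thesis ..
    next
      case False
      have "(if i = 0 \<and> j = 0 then d else 0) = 0"
        using False by simp
      then have "(\<Sum>l<Suc n. ?C i l * ?C j l) = (\<Sum>l<n. cycB n \<sigma> \<tau> i l * cycB n \<sigma> \<tau> j l)"
        using sum_C by linarith
      also have "\<dots> = A i j"
        using A_ij edge i j cycB_gram_off_diag[OF n i j False, of \<sigma> \<tau>]
          cycB_gram_off_diag[OF n i j False, of s t]
        by simp
      finally show ?thesis ..
    qed
  qed
  then have gram: "is_gram n (Suc n) A ?C"
    by (simp add: is_gram_def)
  have \<sigma>\<tau>_nonzero: "\<forall>i<n. \<sigma> i \<noteq> 0 \<and> \<tau> i \<noteq> 0"
    using pos by auto
  have old_cols: "cols_lin_indep n ?C l l'" if "l < n" "l' < n" "l \<noteq> l'" for l l'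
    using cycB_cols_lin_indep[OF n \<sigma>\<tau>_nonzero that] cols_lin_indep_cong[of n ?C l "cycB n \<sigma> \<tau>" l']
      that by simp
  have new_col: "cols_lin_indep n ?C l n" if "l < n" for l
  proof -
    define m where "m = (if l = 0 then Suc l else l)"
    have "m < n" "?C m l \<noteq> 0" "?C m n = 0" "0 < n" "?C 0 n \<noteq> 0"
      using n pos that \<open>0 < d\<close> by (auto simp: m_def cycB_def)
    then show ?thesis
      by (rule cols_lin_indepI)
  qed
  have "cols_lin_indep n ?C l l'" if lt: "l < Suc n" "l' < Suc n" and ne: "l \<noteq> l'" for l l'
  proof -
    consider "l < n" "l' < n" | "l < n" "l' = n" | "l = n" "l' < n"
      using lt ne by (auto simp: less_Suc_eq)
    then show ?thesis
    proof cases
      case 1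
      then show ?thesis
        using old_cols ne by blast
    next
      case 2
      then show ?thesis
        using new_col by blast
    next
      case 3
      then show ?thesis
        using new_col cols_lin_indep_commute by blast
    qed
  qed
  with nonneg gram show ?thesis
    by (simp add: cp_factorization_def)
qed

primrec affine_orbit :: "(nat \<Rightarrow> real) \<Rightarrow> real \<Rightarrow> nat \<Rightarrow> real" where
  "affine_orbit \<rho> x 0 = x"
| "affine_orbit \<rho> x (Suc i) = \<rho> i * (affine_orbit \<rho> x i + 1)"

lemma affine_orbit_eq: "affine_orbit \<rho> x i = affine_orbit \<rho> 0 i + x * (\<Prod>j<i. \<rho> j)"
  by (induction i) (simp_all add: algebra_simps)

lemma affine_orbit_pos: "\<forall>j. 0 < \<rho> j \<Longrightarrow> 0 < x \<Longrightarrow> 0 < affine_orbit \<rho> x i"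
  by (induction i) simp_all

lemma affine_orbit_nonneg_after:
  assumes "\<forall>j. 0 < \<rho> j" "-1 \<le> affine_orbit \<rho> x i" "i < j"
  shows "0 \<le> affine_orbit \<rho> x j"
  using assms(3)
proof (induction j)
  case (Suc j)
  then have "-1 \<le> affine_orbit \<rho> x j"
    using assms(2) by (cases "i = j") auto
  then show ?case
    using assms(1) less_imp_le[of 0 "\<rho> j"] by simp
qed simp

lemma affine_orbit_escaping:
  assumes "0 < n" "\<forall>j. 0 < \<rho> j" "(\<Prod>j<n. \<rho> j) \<noteq> 1"
  shows "\<exists>x. (\<forall>i<n. 0 < affine_orbit \<rho> x i \<or> affine_orbit \<rho> x i < -1)
           \<and> 1 / x < 1 / affine_orbit \<rho> x n"
proof -
  define R where "R = (\<Prod>j<n. \<rho> j)"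
  define c where "c = affine_orbit \<rho> 0 n"
  have orbit_n: "affine_orbit \<rho> x n = c + x * R" for x
    unfolding R_def c_def by (rule affine_orbit_eq)
  consider "R < 1" | "1 < R"
    using assms(3) unfolding R_def by linarith
  then show ?thesis
  proof cases
    case 1
    define x where "x = (\<bar>c\<bar> + 1) / (1 - R)"
    have "0 < x"
      using 1 by (simp add: x_def)
    have "x * (1 - R) = \<bar>c\<bar> + 1"
      using 1 by (simp add: x_def)
    then have "affine_orbit \<rho> x n < x"
      by (simp add: orbit_n algebra_simps)
    moreover have "0 < affine_orbit \<rho> x i" for i
      using affine_orbit_pos assms(2) \<open>0 < x\<close> by blast
    ultimately show ?thesis
      by (intro exI[of _ x]) (simp add: frac_less2)
  next
    case 2
    define x where "x = - (\<bar>c\<bar> + 1) / (R - 1)"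
    have "x < 0"
      unfolding x_def using 2 by (intro divide_neg_pos) auto
    have "x * (R - 1) = - (\<bar>c\<bar> + 1)"
      using 2 by (simp add: x_def)
    then have below: "affine_orbit \<rho> x n < x"
      by (simp add: orbit_n algebra_simps)
    have "affine_orbit \<rho> x i < -1" if "i < n" for i
    proof (rule ccontr)
      assume "\<not> affine_orbit \<rho> x i < -1"
      then have "0 \<le> affine_orbit \<rho> x n"
        using affine_orbit_nonneg_after[OF assms(2) _ that] by simp
      with below \<open>x < 0\<close> show False
        by simp
    qed
    moreover have "1 / x < 1 / affine_orbit \<rho> x n"
      using below \<open>x < 0\<close> by (simp add: divide_simps)
    ultimately show ?thesis
      by blast
  qed
qed

lemma rescaled_vertex_sum:
  fixes a b u u' :: real
  assumes "a \<noteq> 0" "b \<noteq> 0" "u \<noteq> 0" "u + 1 \<noteq> 0" "0 < 1 + 1 / u" "0 < 1 + 1 / u'"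
  shows "(a * sqrt (1 + 1 / u')) ^ 2 + (b / sqrt (1 + 1 / u)) ^ 2
    = a ^ 2 + b ^ 2 + a ^ 2 * (1 / u' - 1 / (a ^ 2 / b ^ 2 * (u + 1)))"
proof -
  have cancel: "a ^ 2 / (a ^ 2 / b ^ 2 * w) = b ^ 2 / w" if "w \<noteq> 0" for w
    using assms(1,2) that by (simp add: field_simps)
  have "(a * sqrt (1 + 1 / u')) ^ 2 = a ^ 2 + a ^ 2 / u'"
    using assms(6) by (simp add: power_mult_distrib algebra_simps)
  moreover have "(b / sqrt (1 + 1 / u)) ^ 2 = b ^ 2 - b ^ 2 / (u + 1)"
    using assms(3-5) by (simp add: power_divide field_simps)
  moreover have "a ^ 2 / (a ^ 2 / b ^ 2 * (u + 1)) = b ^ 2 / (u + 1)"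
    using cancel assms(4) by blast
  ultimately show ?thesis
    by (simp add: right_diff_distrib)
qed

lemma prod_cyclic_ratios:
  "(\<Prod>j<n. s (Suc j mod n) ^ 2 / t j ^ 2) = (\<Prod>i<n. s i) ^ 2 / (\<Prod>i<n. t i :: real) ^ 2"
proof -
  have "(\<Prod>j<n. s (Suc j mod n) ^ 2 / t j ^ 2) = (\<Prod>j<n. s (Suc j mod n) ^ 2) / (\<Prod>j<n. t j ^ 2)"
    by (rule prod_dividef)
  then show ?thesis
    by (simp add: prod_Suc_mod[of "\<lambda>i. s i ^ 2"] prod_power_distrib)
qed

lemma cycle_weights_perturbation:
  fixes s t :: "nat \<Rightarrow> real"
  assumes n: "0 < n" and pos: "\<forall>i<n. 0 < s i \<and> 0 < t i"
    and unbalanced: "(\<Prod>i<n. s i) \<noteq> (\<Prod>i<n. t i)"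
  shows "\<exists>\<sigma> \<tau> d. 0 < d \<and> (\<forall>i<n. 0 < \<sigma> i \<and> 0 < \<tau> i \<and> \<sigma> i * \<tau> i = s i * t i) \<and>
           (\<forall>i<n. \<sigma> (Suc i mod n) ^ 2 + \<tau> i ^ 2 + (if Suc i mod n = 0 then d else 0)
                  = s (Suc i mod n) ^ 2 + t i ^ 2)"
proof -
  txt \<open>Take \<open>\<sigma> i = s i * sqrt (X i)\<close> and \<open>\<tau> i = t i / sqrt (X i)\<close> with \<open>X i = 1 + 1 / u i\<close>.
    The vertex sums are then preserved exactly when \<open>u (i + 1) = \<rho> i * (u i + 1)\<close>, and an
    orbit with \<open>1 / u 0 < 1 / u n\<close> leaves a deficit only at vertex \<open>0\<close>. The \<open>j mod n\<close> in \<open>\<rho>\<close>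
    only serves to make \<open>\<rho>\<close> positive everywhere.\<close>
  define \<rho> where "\<rho> j = s (Suc j mod n) ^ 2 / t (j mod n) ^ 2" for j
  have "0 < \<rho> j" for j
    using pos[rule_format, of "Suc j mod n"] pos[rule_format, of "j mod n"] n
    by (simp add: \<rho>_def)
  then have \<rho>_pos: "\<forall>j. 0 < \<rho> j" ..
  have "(\<Prod>j<n. \<rho> j) = (\<Prod>i<n. s i) ^ 2 / (\<Prod>i<n. t i) ^ 2"
    unfolding prod_cyclic_ratios[symmetric] by (intro prod.cong) (simp_all add: \<rho>_def)
  also have "\<dots> \<noteq> 1"
  proof -
    have "0 < (\<Prod>i<n. s i)" "0 < (\<Prod>i<n. t i)"
      using pos by (auto intro: prod_pos)
    then show ?thesis
      using unbalanced by (simp add: power2_eq_iff_nonneg)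
  qed
  finally obtain x where
    escaping: "\<forall>i<n. 0 < affine_orbit \<rho> x i \<or> affine_orbit \<rho> x i < -1"
    and x: "1 / x < 1 / affine_orbit \<rho> x n"
    using affine_orbit_escaping[OF n \<rho>_pos] by blast
  define u where "u = affine_orbit \<rho> x"
  define X where "X i = 1 + 1 / u i" for i
  have u_nonzero: "u i \<noteq> 0" "u i + 1 \<noteq> 0" if "i < n" for i
    using escaping that unfolding u_def by fastforce+
  have X_pos: "0 < X i" if "i < n" for i
  proof (cases "0 < u i")
    case False
    then have "u i < -1"
      using escaping that unfolding u_def by blast
    then show ?thesis
      unfolding X_def by (simp add: field_simps)
  qed (simp add: X_def add_pos_pos)
  define \<sigma> where "\<sigma> i = s i * sqrt (X i)" for i
  define \<tau> where "\<tau> i = t i / sqrt (X i)" for i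
  define d where "d = s 0 ^ 2 * (1 / u n - 1 / x)"
  have "0 < d"
    using pos n x unfolding d_def u_def by (intro mult_pos_pos) auto
  moreover have "0 < \<sigma> i \<and> 0 < \<tau> i \<and> \<sigma> i * \<tau> i = s i * t i" if "i < n" for i
    using pos X_pos[OF that] that unfolding \<sigma>_def \<tau>_def by simp
  moreover have "\<sigma> (Suc i mod n) ^ 2 + \<tau> i ^ 2 + (if Suc i mod n = 0 then d else 0)
      = s (Suc i mod n) ^ 2 + t i ^ 2" if i: "i < n" for i
  proof -
    let ?j = "Suc i mod n"
    have j: "?j < n"
      using n by simp
    have "s ?j \<noteq> 0" "t i \<noteq> 0"
      using pos i j by (metis less_irrefl)+
    then have "\<sigma> ?j ^ 2 + \<tau> i ^ 2 = s ?j ^ 2 + t i ^ 2 + s ?j ^ 2 * (1 / u ?j - 1 / u (Suc i))"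
      using rescaled_vertex_sum[of "s ?j" "t i" "u i" "u ?j"] u_nonzero[OF i] X_pos[OF i] X_pos[OF j] i
      by (simp add: \<sigma>_def \<tau>_def X_def u_def \<rho>_def)
    moreover have "s ?j ^ 2 * (1 / u ?j - 1 / u (Suc i)) + (if ?j = 0 then d else 0) = 0"
    proof (cases "Suc i = n")
      case True
      then show ?thesis
        by (simp add: d_def u_def right_diff_distrib)
    next
      case False
      then show ?thesis
        using i by (simp add: Suc_mod_eq_if)
    qed
    ultimately show ?thesis
      by linarith
  qed
  ultimately show ?thesis
    by blast
qed

section \<open>Uniqueness for equal products\<close>

lemma prod_less_prod_cancel:
  fixes f g p q :: "'a \<Rightarrow> real"
  assumes "finite I" "I \<noteq> {}" "\<forall>i\<in>I. 0 < f i \<and> 0 \<le> p i \<and> f i * p i < g i * q i"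
    and "prod f I = prod g I"
  shows "prod p I < prod q I"
proof -
  obtain i where "i \<in> I"
    using assms(2) by blast
  have less: "0 \<le> f j * p j \<and> f j * p j < g j * q j" if "j \<in> I" for j
    using assms(3) that by (simp add: less_imp_le)
  have "prod f I * prod p I = (\<Prod>i\<in>I. f i * p i)"
    by (simp add: prod.distrib)
  also have "\<dots> < (\<Prod>i\<in>I. g i * q i)"
    using less \<open>i \<in> I\<close> assms(1) by (intro prod_mono_strict) (fastforce intro: less_imp_le)+
  also have "\<dots> = prod f I * prod q I"
    by (simp add: prod.distrib assms(4))
  finally show ?thesis
    using assms(3) by (simp add: prod_pos)
qed

lemma cyclic_sign_pattern_zero:
  fixes w :: "nat \<Rightarrow> real"
  assumes nonpos_step: "\<And>i. i < n \<Longrightarrow> w i \<le> 0 \<Longrightarrow> w (Suc i mod n) \<le> 0"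
    and neg_step: "\<And>i. i < n \<Longrightarrow> w i < 0 \<Longrightarrow> w (Suc i mod n) < 0"
    and "\<not> (\<forall>i<n. 0 < w i)" "\<not> (\<forall>i<n. w i < 0)" "i < n"
  shows "w i = 0"
proof -
  obtain j where "j < n" "w j \<le> 0"
    using assms(3) by force
  then have nonpos: "w m \<le> 0" if "m < n" for m
    using cyclic_induct[of j n "\<lambda>i. w i \<le> 0"] nonpos_step that by blast
  have "0 \<le> w m" if "m < n" for m
  proof (rule ccontr)
    assume "\<not> 0 \<le> w m"
    then have "w i < 0" if "i < n" for i
      using cyclic_induct[of m n "\<lambda>i. w i < 0"] neg_step \<open>m < n\<close> that by force
    with assms(4) show False
      by blast
  qed
  with nonpos assms(5) show ?thesis
    by (simp add: order.antisym)
qed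

lemma cyclic_cauchy_schwarz_tight:
  fixes s t a b :: "nat \<Rightarrow> real"
  assumes pos: "\<forall>i<n. 0 < s i \<and> 0 < t i" and nonneg: "\<forall>i<n. 0 \<le> a i \<and> 0 \<le> b i"
    and edge: "\<forall>i<n. (s i * t i) ^ 2 \<le> a i * b i"
    and vertex: "\<forall>i<n. a (Suc i mod n) + b i \<le> s (Suc i mod n) ^ 2 + t i ^ 2"
    and balanced: "(\<Prod>i<n. s i) = (\<Prod>i<n. t i)"
  shows "\<forall>i<n. a i = s i ^ 2 \<and> b i = t i ^ 2"
proof -
  define w where "w i = a i - s i ^ 2" for i
  have a_pos: "0 < a i" if "i < n" for i
  proof -
    have "0 < a i * b i"
      using edge pos that by (metis mult_pos_pos order_less_le_trans zero_less_power)
    then show ?thesis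
      using nonneg[rule_format, OF that] by (auto simp: zero_less_mult_iff)
  qed
  have key: "w (Suc i mod n) * a i \<le> t i ^ 2 * w i" if i: "i < n" for i
  proof -
    have "w (Suc i mod n) * a i \<le> (t i ^ 2 - b i) * a i"
      using vertex a_pos i unfolding w_def by (intro mult_right_mono) (auto intro: less_imp_le)
    also have "\<dots> \<le> t i ^ 2 * w i"
      using edge i unfolding w_def by (simp add: algebra_simps power_mult_distrib)
    finally show ?thesis .
  qed
  have sq_prods: "(\<Prod>i<n. s i ^ 2) = (\<Prod>i<n. t i ^ 2)"
    using balanced by (simp flip: prod_power_distrib)
  have "w i = 0" if i: "i < n" for i
  proof (rule cyclic_sign_pattern_zero[OF _ _ _ _ i])
    show "w (Suc j mod n) \<le> 0" if "j < n" "w j \<le> 0" for j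
    proof -
      have "w (Suc j mod n) * a j \<le> 0"
        using key[OF that(1)] mult_nonneg_nonpos[OF zero_le_power2[of "t j"] that(2)] by linarith
      then show ?thesis
        using a_pos[OF that(1)] by (simp add: mult_le_0_iff)
    qed
    show "w (Suc j mod n) < 0" if "j < n" "w j < 0" for j
    proof -
      have "0 < t j"
        using pos that(1) by blast
      then have "w (Suc j mod n) * a j < 0"
        using key[OF that(1)] mult_pos_neg[OF zero_less_power[of "t j" 2] that(2)] by linarith
      then show ?thesis
        using a_pos[OF that(1)] by (simp add: mult_less_0_iff)
    qed
    show "\<not> (\<forall>j<n. 0 < w j)"
    proof
      assume w_pos: "\<forall>j<n. 0 < w j"
      have "w (Suc j mod n) * s j ^ 2 < w j * t j ^ 2" if "j < n" for j
      proof -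
        have "w (Suc j mod n) * s j ^ 2 < w (Suc j mod n) * a j"
          using w_pos that unfolding w_def by (intro mult_strict_left_mono) auto
        also have "\<dots> \<le> w j * t j ^ 2"
          using key[OF that] by (simp add: mult.commute)
        finally show ?thesis .
      qed
      then have "(\<Prod>j<n. s j ^ 2) < (\<Prod>j<n. t j ^ 2)"
        using w_pos i prod_Suc_mod[of w n]
        by (intro prod_less_prod_cancel[where f = "\<lambda>j. w (Suc j mod n)" and g = w]) auto
      with sq_prods show False
        by simp
    qed
    show "\<not> (\<forall>j<n. w j < 0)"
    proof
      assume w_neg: "\<forall>j<n. w j < 0"
      have "- w j * t j ^ 2 < - w (Suc j mod n) * s j ^ 2" if "j < n" for j
      proof -
        have "- w j * t j ^ 2 \<le> - w (Suc j mod n) * a j"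
          using key[OF that] by (simp add: mult.commute)
        also have "\<dots> < - w (Suc j mod n) * s j ^ 2"
          using w_neg that unfolding w_def by (intro mult_strict_left_mono) auto
        finally show ?thesis .
      qed
      then have "(\<Prod>j<n. t j ^ 2) < (\<Prod>j<n. s j ^ 2)"
        using w_neg i prod_Suc_mod[of "\<lambda>j. - w j" n]
        by (intro prod_less_prod_cancel[where f = "\<lambda>j. - w j" and g = "\<lambda>j. - w (Suc j mod n)"]) auto
      with sq_prods show False
        by simp
    qed
  qed
  then have a_eq: "a i = s i ^ 2" if "i < n" for i
    using that unfolding w_def by simp
  have "b i = t i ^ 2" if i: "i < n" for i
  proof -
    have "s i ^ 2 * t i ^ 2 \<le> s i ^ 2 * b i"
      using edge a_eq i by (simp add: power_mult_distrib)
    moreover have "0 < s i ^ 2"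
      using pos[rule_format, OF i] by simp
    ultimately have "t i ^ 2 \<le> b i"
      by simp
    moreover have "b i \<le> t i ^ 2"
      using vertex[rule_format, OF i] a_eq[of "Suc i mod n"] i by simp
    ultimately show ?thesis
      by simp
  qed
  with a_eq show ?thesis
    by simp
qed

locale cycle_cp_factorization =
  fixes n k :: nat and s t :: "nat \<Rightarrow> real" and A C :: "nat \<Rightarrow> nat \<Rightarrow> real"
  assumes n_ge_4: "4 \<le> n"
    and st_pos: "\<forall>i<n. 0 < s i \<and> 0 < t i"
    and A_gram: "is_gram n n A (cycB n s t)"
    and cp: "cp_factorization n k A C"
begin

lemma A_diag: "i < n \<Longrightarrow> A (Suc i mod n) (Suc i mod n) = s (Suc i mod n) ^ 2 + t i ^ 2"
  using A_gram cycB_gram_diag[of n i s t] n_ge_4 by (simp add: is_gram_def)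

lemma A_off_diag:
  "i < n \<Longrightarrow> j < n \<Longrightarrow> i \<noteq> j \<Longrightarrow>
    A i j = (if j = Suc i mod n then s i * t i else if i = Suc j mod n then s j * t j else 0)"
  using A_gram cycB_gram_off_diag[of n i j s t] n_ge_4 by (simp add: is_gram_def)

lemma C_nonneg: "i < n \<Longrightarrow> l < k \<Longrightarrow> 0 \<le> C i l"
  using cp by (simp add: cp_factorization_def nonneg_mat_def)

lemma A_eq_sum: "i < n \<Longrightarrow> j < n \<Longrightarrow> A i j = (\<Sum>l<k. C i l * C j l)"
  using cp by (simp add: cp_factorization_def is_gram_def)

lemma C_cols_lin_indep: "l < k \<Longrightarrow> l' < k \<Longrightarrow> l \<noteq> l' \<Longrightarrow> cols_lin_indep n C l l'"
  using cp by (simp add: cp_factorization_def)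

lemma C_col_support_adjacent:
  assumes "l < k" "m < n" "m' < n" "m \<noteq> m'" "0 < C m l" "0 < C m' l"
  shows "m' = Suc m mod n \<or> m = Suc m' mod n"
proof (rule ccontr)
  assume "\<not> ?thesis"
  then have "A m m' = 0"
    using A_off_diag assms(2-4) by simp
  moreover have "C m l * C m' l \<le> (\<Sum>l<k. C m l * C m' l)"
    using assms C_nonneg by (intro member_le_sum) simp_all
  ultimately show False
    using A_eq_sum assms(2,3,5,6) by (metis mult_pos_pos not_less)
qed

definition edge_cols :: "nat \<Rightarrow> nat set" where
  "edge_cols i = {l. l < k \<and> 0 < C i l \<and> 0 < C (Suc i mod n) l}"

lemma edge_cols_subset: "edge_cols i \<subseteq> {..<k}"
  by (auto simp: edge_cols_def)

lemma finite_edge_cols: "finite (edge_cols i)"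
  using edge_cols_subset by (rule finite_subset) simp

lemma edge_cols_support:
  assumes i: "i < n" and l: "l \<in> edge_cols i" and m: "m < n" "0 < C m l"
  shows "m = i \<or> m = Suc i mod n"
proof (rule ccontr)
  assume m_other: "\<not> ?thesis"
  have "l < k" "0 < C i l" "0 < C (Suc i mod n) l"
    using l by (auto simp: edge_cols_def)
  then have "i = Suc m mod n" "m = Suc (Suc i mod n) mod n \<or> Suc i mod n = Suc m mod n"
    using C_col_support_adjacent[of l m i] C_col_support_adjacent[of l m "Suc i mod n"]
      i m m_other n_ge_4 by auto
  then show False
    using i m m_other n_ge_4 by (auto simp: Suc_mod_eq_if split: if_splits)
qed

lemma edge_cols_disjoint:
  assumes "i < n" "j < n" "i \<noteq> j"
  shows "edge_cols i \<inter> edge_cols j = {}"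
proof (rule ccontr)
  assume "edge_cols i \<inter> edge_cols j \<noteq> {}"
  then obtain l where l: "l \<in> edge_cols i" "0 < C j l" "0 < C (Suc j mod n) l"
    by (auto simp: edge_cols_def)
  then have "j = Suc i mod n" "Suc j mod n = i \<or> Suc j mod n = Suc i mod n"
    using edge_cols_support[OF assms(1) l(1)] assms n_ge_4 by auto
  then show False
    using assms n_ge_4 by (auto simp: Suc_mod_eq_if split: if_splits)
qed

definition edge_sqsum_fst :: "nat \<Rightarrow> real" where
  "edge_sqsum_fst i = (\<Sum>l\<in>edge_cols i. C i l ^ 2)"

definition edge_sqsum_snd :: "nat \<Rightarrow> real" where
  "edge_sqsum_snd i = (\<Sum>l\<in>edge_cols i. C (Suc i mod n) l ^ 2)"

lemma edge_cols_inner: "i < n \<Longrightarrow> (\<Sum>l\<in>edge_cols i. C i l * C (Suc i mod n) l) = s i * t i"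
proof -
  assume i: "i < n"
  have "(\<Sum>l\<in>edge_cols i. C i l * C (Suc i mod n) l) = (\<Sum>l<k. C i l * C (Suc i mod n) l)"
  proof (rule sum.mono_neutral_left)
    show "\<forall>l\<in>{..<k} - edge_cols i. C i l * C (Suc i mod n) l = 0"
    proof
      fix l
      assume "l \<in> {..<k} - edge_cols i"
      then have "l < k" "\<not> (0 < C i l \<and> 0 < C (Suc i mod n) l)"
        by (auto simp: edge_cols_def)
      moreover have "0 \<le> C i l" "0 \<le> C (Suc i mod n) l"
        using C_nonneg i \<open>l < k\<close> by simp_all
      ultimately show "C i l * C (Suc i mod n) l = 0"
        by auto
    qed
  qed (simp_all add: edge_cols_subset)
  also have "\<dots> = s i * t i"
    using A_eq_sum[of i "Suc i mod n"] A_off_diag[of i "Suc i mod n"] i n_ge_4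
    by (simp add: Suc_mod_eq_if)
  finally show ?thesis .
qed

lemma edge_cauchy_schwarz: "i < n \<Longrightarrow> (s i * t i) ^ 2 \<le> edge_sqsum_fst i * edge_sqsum_snd i"
  using Cauchy_Schwarz_ineq_sum[of "\<lambda>l. C i l" "\<lambda>l. C (Suc i mod n) l" "edge_cols i"]
  by (simp add: edge_cols_inner edge_sqsum_fst_def edge_sqsum_snd_def)

lemma A_diag_eq_sums:
  assumes "i < n"
  shows "A (Suc i mod n) (Suc i mod n) = edge_sqsum_fst (Suc i mod n) + edge_sqsum_snd i
           + (\<Sum>l\<in>{..<k} - (edge_cols (Suc i mod n) \<union> edge_cols i). C (Suc i mod n) l ^ 2)"
proof -
  let ?j = "Suc i mod n"
  have "?j \<noteq> i" "?j < n"
    using assms n_ge_4 by (auto simp: Suc_mod_eq_if)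
  then have disjoint: "edge_cols ?j \<inter> edge_cols i = {}"
    using edge_cols_disjoint assms by blast
  have "A ?j ?j = (\<Sum>l<k. C ?j l ^ 2)"
    using A_eq_sum \<open>?j < n\<close> by (simp add: power2_eq_square)
  also have "\<dots> = (\<Sum>l\<in>edge_cols ?j \<union> edge_cols i. C ?j l ^ 2)
                 + (\<Sum>l\<in>{..<k} - (edge_cols ?j \<union> edge_cols i). C ?j l ^ 2)"
    using edge_cols_subset by (subst sum.subset_diff[of "edge_cols ?j \<union> edge_cols i"]) auto
  also have "(\<Sum>l\<in>edge_cols ?j \<union> edge_cols i. C ?j l ^ 2) = edge_sqsum_fst ?j + edge_sqsum_snd i"
    using disjoint finite_edge_cols
    by (simp add: sum.union_disjoint edge_sqsum_fst_def edge_sqsum_snd_def)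
  finally show ?thesis .
qed

lemma edge_vertex_ineq:
  "i < n \<Longrightarrow> edge_sqsum_fst (Suc i mod n) + edge_sqsum_snd i \<le> s (Suc i mod n) ^ 2 + t i ^ 2"
  using A_diag_eq_sums A_diag by (simp add: sum_nonneg)

end

locale balanced_cycle_cp_factorization = cycle_cp_factorization +
  assumes balanced: "(\<Prod>i<n. s i) = (\<Prod>i<n. t i)"
begin

lemma edge_sqsums_eq: "\<forall>i<n. edge_sqsum_fst i = s i ^ 2 \<and> edge_sqsum_snd i = t i ^ 2"
proof (rule cyclic_cauchy_schwarz_tight[OF st_pos _ _ _ balanced])
  show "\<forall>i<n. 0 \<le> edge_sqsum_fst i \<and> 0 \<le> edge_sqsum_snd i"
    by (simp add: edge_sqsum_fst_def edge_sqsum_snd_def sum_nonneg)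
  show "\<forall>i<n. (s i * t i) ^ 2 \<le> edge_sqsum_fst i * edge_sqsum_snd i"
    using edge_cauchy_schwarz by blast
  show "\<forall>i<n. edge_sqsum_fst (Suc i mod n) + edge_sqsum_snd i \<le> s (Suc i mod n) ^ 2 + t i ^ 2"
    using edge_vertex_ineq by blast
qed

lemma C_outside_edge_cols:
  assumes i: "i < n" and l: "l < k" "l \<notin> edge_cols (Suc i mod n) \<union> edge_cols i"
  shows "C (Suc i mod n) l = 0"
proof -
  have "Suc i mod n < n"
    using i by simp
  then have "edge_sqsum_fst (Suc i mod n) + edge_sqsum_snd i = s (Suc i mod n) ^ 2 + t i ^ 2"
    using edge_sqsums_eq i by simp
  then have "(\<Sum>l\<in>{..<k} - (edge_cols (Suc i mod n) \<union> edge_cols i). C (Suc i mod n) l ^ 2) = 0"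
    using A_diag_eq_sums[OF i] A_diag[OF i] by linarith
  moreover have "l \<in> {..<k} - (edge_cols (Suc i mod n) \<union> edge_cols i)"
    using l by simp
  ultimately show ?thesis
    using sum_nonneg_eq_0_iff[of "{..<k} - (edge_cols (Suc i mod n) \<union> edge_cols i)"
        "\<lambda>l. C (Suc i mod n) l ^ 2"] by simp
qed

lemma edge_col_proportional:
  assumes i: "i < n" and l: "l \<in> edge_cols i"
  shows "t i * C i l = s i * C (Suc i mod n) l"
proof -
  have "(\<Sum>l\<in>edge_cols i. (t i * C i l - s i * C (Suc i mod n) l) ^ 2)
      = t i ^ 2 * edge_sqsum_fst i - 2 * s i * t i * (\<Sum>l\<in>edge_cols i. C i l * C (Suc i mod n) l)
        + s i ^ 2 * edge_sqsum_snd i"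
    by (simp add: edge_sqsum_fst_def edge_sqsum_snd_def power2_eq_square algebra_simps
        sum.distrib sum_subtractf sum_distrib_left)
  also have "\<dots> = 0"
    using edge_sqsums_eq[rule_format, OF i] edge_cols_inner[OF i] by (simp add: power2_eq_square)
  finally show ?thesis
    using l finite_edge_cols by (simp add: sum_nonneg_eq_0_iff)
qed

lemma edge_col_multiple:
  assumes i: "i < n" and l: "l \<in> edge_cols i" and m: "m < n"
  shows "C m l = C i l / s i * cycB n s t m i"
proof -
  have s_pos: "0 < s i"
    using st_pos i by blast
  consider "m = i" | "m \<noteq> i" "m = Suc i mod n" | "m \<noteq> i" "m \<noteq> Suc i mod n"
    by blast
  then show ?thesis
  proof cases
    case 1
    then show ?thesis
      using s_pos by (simp add: cycB_def)
  next
    case 2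
    then show ?thesis
      using edge_col_proportional[OF i l] s_pos by (auto simp: cycB_def field_simps)
  next
    case 3
    have "l < k"
      using l by (simp add: edge_cols_def)
    moreover have "\<not> 0 < C m l"
      using edge_cols_support[OF i l m] 3 by blast
    ultimately have "C m l = 0"
      using C_nonneg[OF m] by fastforce
    then show ?thesis
      using 3 by (simp add: cycB_def)
  qed
qed

lemma edge_cols_singleton: "i < n \<Longrightarrow> \<exists>l. edge_cols i = {l}"
proof -
  assume i: "i < n"
  have "0 < s i * t i"
    using st_pos i by simp
  then have "edge_cols i \<noteq> {}"
    using edge_cols_inner[OF i] by auto
  moreover have "l = l'" if l: "l \<in> edge_cols i" "l' \<in> edge_cols i" for l l'
  proof (rule ccontr)
    assume "l \<noteq> l'"
    then have "cols_lin_indep n C l l'"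
      using l C_cols_lin_indep by (simp add: edge_cols_def)
    moreover have "\<forall>m<n. C i l' * C m l + (- C i l) * C m l' = 0"
      using edge_col_multiple[OF i l(1)] edge_col_multiple[OF i l(2)] by simp
    ultimately have "C i l' = 0"
      unfolding cols_lin_indep_def by blast
    then show False
      using l(2) by (simp add: edge_cols_def)
  qed
  ultimately show ?thesis
    by blast
qed

definition edge_col :: "nat \<Rightarrow> nat" where
  "edge_col i = the_elem (edge_cols i)"

lemma edge_cols_eq: "i < n \<Longrightarrow> edge_cols i = {edge_col i}"
proof -
  assume "i < n"
  then obtain l where "edge_cols i = {l}"
    using edge_cols_singleton by blast
  then show ?thesis
    by (simp add: edge_col_def)
qed

lemma C_edge_col: "i < n \<Longrightarrow> m < n \<Longrightarrow> C m (edge_col i) = cycB n s t m i"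
proof -
  assume i: "i < n" and m: "m < n"
  have l: "edge_col i \<in> edge_cols i"
    using edge_cols_eq[OF i] by simp
  have "C i (edge_col i) ^ 2 = s i ^ 2"
    using edge_sqsums_eq[rule_format, OF i] by (simp add: edge_sqsum_fst_def edge_cols_eq[OF i])
  moreover have "0 < C i (edge_col i)" "0 < s i"
    using l st_pos i by (auto simp: edge_cols_def)
  ultimately have "C i (edge_col i) = s i"
    by (simp add: power2_eq_iff_nonneg)
  then show ?thesis
    using edge_col_multiple[OF i l m] \<open>0 < s i\<close> by simp
qed

lemma bij_betw_edge_col: "bij_betw edge_col {..<n} {..<k}"
proof (rule bij_betw_imageI)
  show inj: "inj_on edge_col {..<n}"
  proof (rule inj_onI)
    fix i j
    assume "i \<in> {..<n}" "j \<in> {..<n}" "edge_col i = edge_col j"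
    then show "i = j"
      using edge_cols_disjoint[of i j] edge_cols_eq by fastforce
  qed
  have into: "edge_col ` {..<n} \<subseteq> {..<k}"
    using edge_cols_eq edge_cols_subset by fastforce
  have "n \<le> k"
    using card_inj_on_le[OF inj into] by simp
  have "l \<in> edge_col ` {..<n}" if l: "l < k" for l
  proof -
    define l' where "l' = (if l = 0 then 1 else 0 :: nat)"
    have "l' < k" "l \<noteq> l'"
      using \<open>n \<le> k\<close> n_ge_4 by (auto simp: l'_def)
    then obtain m where m: "m < n" "C m l \<noteq> 0"
      using cols_lin_indep_nonzero_col[OF C_cols_lin_indep[OF l]] by blast
    obtain i where i: "i < n" "m = Suc i mod n"
      using ex_Suc_mod_eq[OF m(1)] by blast
    have "l \<in> edge_cols m \<union> edge_cols i"
      using C_outside_edge_cols[OF i(1) l] i m by blast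
    then show ?thesis
      using edge_cols_eq i m by auto
  qed
  with into show "edge_col ` {..<n} = {..<k}"
    by blast
qed

theorem unique_up_to_column_permutation:
  "k = n \<and> (\<exists>\<pi>. bij_betw \<pi> {..<n} {..<n} \<and> (\<forall>i<n. \<forall>j<n. C i j = cycB n s t i (\<pi> j)))"
proof -
  have k: "k = n"
    using bij_betw_same_card[OF bij_betw_edge_col] by simp
  define \<pi> where "\<pi> = inv_into {..<n} edge_col"
  have "bij_betw \<pi> {..<n} {..<n}"
    using bij_betw_inv_into[OF bij_betw_edge_col] k by (simp add: \<pi>_def)
  moreover have "C i j = cycB n s t i (\<pi> j)" if "i < n" "j < n" for i j
  proof -
    have "j \<in> edge_col ` {..<n}"
      using bij_betw_edge_col k that(2) by (simp add: bij_betw_def)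
    then show ?thesis
      using C_edge_col[OF _ that(1), of "\<pi> j"] inv_into_into[of j edge_col "{..<n}"]
      by (simp add: \<pi>_def f_inv_into_f)
  qed
  ultimately show ?thesis
    using k by blast
qed

end

theorem corollary4p4:
  fixes n :: nat and A :: "nat \<Rightarrow> nat \<Rightarrow> real" and s t :: "nat \<Rightarrow> real"
  assumes "n \<ge> 4"
    and "completely_positive n A"
    and "graph_edges n A = cycle_edges n"
    and "\<forall>i<n. s i > 0 \<and> t i > 0"
    and "is_gram n n A (cycB n s t)"
  shows "unique_cp_factorization n n A (cycB n s t) \<longleftrightarrow> (\<Prod>i<n. s i) = (\<Prod>i<n. t i)"
proof
  assume unique: "unique_cp_factorization n n A (cycB n s t)"
  show "(\<Prod>i<n. s i) = (\<Prod>i<n. t i)"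
  proof (rule ccontr)
    assume "(\<Prod>i<n. s i) \<noteq> (\<Prod>i<n. t i)"
    then obtain \<sigma> \<tau> d where "0 < d" "\<forall>i<n. 0 < \<sigma> i \<and> 0 < \<tau> i \<and> \<sigma> i * \<tau> i = s i * t i"
      "\<forall>i<n. \<sigma> (Suc i mod n) ^ 2 + \<tau> i ^ 2 + (if Suc i mod n = 0 then d else 0)
              = s (Suc i mod n) ^ 2 + t i ^ 2"
      using cycle_weights_perturbation[of n s t] assms(1,4) by auto
    then obtain C where "cp_factorization n (Suc n) A C"
      using cycB_extended_cp_factorization[of n \<sigma> \<tau> d s t A] assms(1,5) by auto
    with unique have "Suc n = n"
      unfolding unique_cp_factorization_def by blast
    then show False
      by simp
  qed
next
  assume balanced: "(\<Prod>i<n. s i) = (\<Prod>i<n. t i)"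
  have "k = n \<and> (\<exists>\<pi>. bij_betw \<pi> {..<n} {..<n} \<and> (\<forall>i<n. \<forall>j<n. C i j = cycB n s t i (\<pi> j)))"
    if "cp_factorization n k A C" for k C
  proof -
    interpret balanced_cycle_cp_factorization n k s t A C
      using assms(1,4,5) that balanced by unfold_locales
    show ?thesis
      by (rule unique_up_to_column_permutation)
  qed
  moreover have "cp_factorization n n A (cycB n s t)"
    using cycB_cp_factorization assms(1,4,5) by simp
  ultimately show "unique_cp_factorization n n A (cycB n s t)"
    by (simp add: unique_cp_factorization_def)
qed

end
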